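(* Let $n,d\in\mathbb{Z}_+$ and $m=\tfrac{n^2+n+2}{2}$. Consider $n+md$ qubits, split as an $n$-qubit register holding $x=(x_0,\dots,x_{n-1})\in\mathbb{F}_2^n$, a $d$-qubit register holding $y=(y_0,\dots,y_{d-1})\in\mathbb{F}_2^d$, and $(m-1)d$ ancilla qubits. Let $U_{\mathrm{QUBO}}$ be any unitary with $$U_{\mathrm{QUBO}}\ket{x}\ket{y}\ket{0}^{\otimes(m-1)d}=\ket{x}\ket{y}\bigotimes_{j=0}^{n-1}\bigotimes_{a=0}^{d-1}\Big(\ket{y_a\oplus x_j}\bigotimes_{k=j+1}^{n-1}\ket{y_a\oplus x_j\oplus x_k}\Big)$$ for all $x,y$. Then such a $U_{\mathrm{QUBO}}$ can be implemented by a quantum circuit consisting only of CNOT gates, of depth $O(\log_2(n)+\log_2(d))$.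
   Context: $\oplus$ denotes addition modulo 2 (XOR). $\ket{x}=\ket{x_0}\cdots\ket{x_{n-1}}$ denotes the computational basis state of a bit string. *)

theory Defs
  imports Complex_Main
begin

text \<open>Computational basis states of an N-qubit register are bit strings (bool lists of
  length N, the i-th entry being the value of qubit i, in tensor-product order).\<close>

type_synonym state = "bool list \<Rightarrow> complex"

definition ket :: "bool list \<Rightarrow> state" where
  "ket s = (\<lambda>t. if t = s then 1 else 0)"

definition bxor :: "bool \<Rightarrow> bool \<Rightarrow> bool" (infixl "\<oplus>\<^sub>2" 65) where
  "a \<oplus>\<^sub>2 b = (a \<noteq> b)"

type_synonym cnot_gate = "nat \<times> nat"

definition cnot_bits :: "cnot_gate \<Rightarrow> bool list \<Rightarrow> bool list" where
  "cnot_bits g s = (case g of (c, t) \<Rightarrow> s[t := (s ! t) \<oplus>\<^sub>2 (s ! c)])"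

text \<open>The unitary of a CNOT gate: the linear extension of |s> \<mapsto> |cnot_bits g s>.
  Since CNOT is an involution, (U psi)(s) = psi (cnot_bits g s).\<close>

definition cnot_unitary :: "cnot_gate \<Rightarrow> state \<Rightarrow> state" where
  "cnot_unitary g \<psi> = (\<lambda>s. \<psi> (cnot_bits g s))"

text \<open>A CNOT circuit is a list of layers; each layer is a list of CNOT gates acting on
  pairwise disjoint qubits (so they can be applied in parallel). The depth is the number
  of layers.\<close>

type_synonym cnot_circuit = "cnot_gate list list"

definition valid_layer :: "nat \<Rightarrow> cnot_gate list \<Rightarrow> bool" where
  "valid_layer N L \<longleftrightarrow>
     (\<forall>(c, t) \<in> set L. c < N \<and> t < N \<and> c \<noteq> t) \<and>
     distinct (concat (map (\<lambda>(c, t). [c, t]) L))"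

definition valid_cnot_circuit :: "nat \<Rightarrow> cnot_circuit \<Rightarrow> bool" where
  "valid_cnot_circuit N C \<longleftrightarrow> (\<forall>L \<in> set C. valid_layer N L)"

definition depth :: "cnot_circuit \<Rightarrow> nat" where
  "depth C = length C"

text \<open>Unitary of a circuit: the layers applied in order (first layer first), gates within a
  layer applied in list order (they commute as they act on disjoint qubits).\<close>

definition layer_unitary :: "cnot_gate list \<Rightarrow> state \<Rightarrow> state" where
  "layer_unitary L \<psi> = fold cnot_unitary L \<psi>"

definition circuit_unitary :: "cnot_circuit \<Rightarrow> state \<Rightarrow> state" where
  "circuit_unitary C \<psi> = fold layer_unitary C \<psi>"

text \<open>m = (n^2+n+2)/2 (always an integer).\<close>

definition qubo_m :: "nat \<Rightarrow> nat" where
  "qubo_m n = (n^2 + n + 2) div 2"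

definition qubo_out :: "bool list \<Rightarrow> bool list \<Rightarrow> bool list" where
  "qubo_out xs ys =
     concat (map (\<lambda>j. concat (map (\<lambda>a.
        ((ys ! a) \<oplus>\<^sub>2 (xs ! j)) #
        map (\<lambda>k. (ys ! a) \<oplus>\<^sub>2 (xs ! j) \<oplus>\<^sub>2 (xs ! k)) [j+1..<length xs])
       [0..<length ys])) [0..<length xs])"

end

(*
  Ancilla cell (j, a, k), j <= k, must end up holding y_a xor x_j, plus x_k when k > j.
  The circuit is three CNOT fan-outs in sequence: y_a into every cell with that a, x_j into
  every cell with that j, and x_k into every cell (j, a, k) with j < k. Within a fan-out the
  sources have disjoint target sets and act in parallel; one source reaches t targets by
  doubling: a seed layer copies it into the first target, and round r copies the first 2^r
  targets onto the next 2^r. Since the targets of the later fan-outs do not start at 0, the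
  doubling rounds D are first run backwards: by linearity over F_2, D (D^-1 f xor e) =
  f xor D e, so the fan-out adds the source bit to every target. With t <= (m - 1) d <= n^2 d,
  each fan-out has depth 2R + 1 for R = 2 ceil(log2 n) + ceil(log2 d), so the total depth is
  O(log n + log d).
*)

theory Submission
  imports Defs "HOL-Library.Log_Nat"
begin

section \<open>CNOT circuits on bit assignments\<close>

definition cnot_fun :: "cnot_gate \<Rightarrow> (nat \<Rightarrow> bool) \<Rightarrow> nat \<Rightarrow> bool" where
  "cnot_fun g f = (case g of (c, t) \<Rightarrow> f(t := f t \<oplus>\<^sub>2 f c))"

abbreviation run_cnots :: "cnot_gate list \<Rightarrow> (nat \<Rightarrow> bool) \<Rightarrow> nat \<Rightarrow> bool" where
  "run_cnots gs \<equiv> fold cnot_fun gs"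

lemma cnot_fun_involution: "c \<noteq> t \<Longrightarrow> cnot_fun (c, t) (cnot_fun (c, t) f) = f"
  by (auto simp: cnot_fun_def bxor_def fun_eq_iff)

lemma run_cnots_rev_cancel:
  assumes "\<forall>(c, t) \<in> set gs. c \<noteq> t"
  shows "run_cnots gs (run_cnots (rev gs) f) = f"
  using assms by (induction gs arbitrary: f) (auto simp: cnot_fun_involution)

lemma run_cnots_xor:
  "run_cnots gs (\<lambda>p. a p \<oplus>\<^sub>2 b p) = (\<lambda>p. run_cnots gs a p \<oplus>\<^sub>2 run_cnots gs b p)"
proof (induction gs arbitrary: a b)
  case Nil
  show ?case by simp
next
  case (Cons g gs)
  have "cnot_fun g (\<lambda>p. a p \<oplus>\<^sub>2 b p) = (\<lambda>p. cnot_fun g a p \<oplus>\<^sub>2 cnot_fun g b p)"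
    by (cases g) (auto simp: cnot_fun_def bxor_def fun_eq_iff)
  then show ?case using Cons.IH[of "cnot_fun g a" "cnot_fun g b"] by simp
qed

lemma run_cnots_untargeted: "p \<notin> snd ` set gs \<Longrightarrow> run_cnots gs f p = f p"
  by (induction gs arbitrary: f) (auto simp: cnot_fun_def)

definition disjoint_gates :: "cnot_gate list \<Rightarrow> bool" where
  "disjoint_gates L \<longleftrightarrow> distinct (map fst L @ map snd L)"

lemma disjoint_gates_rev [simp]: "disjoint_gates (rev L) \<longleftrightarrow> disjoint_gates L"
  by (auto simp: disjoint_gates_def rev_map[symmetric])

lemma disjoint_gates_control_neq_target: "disjoint_gates L \<Longrightarrow> (c, t) \<in> set L \<Longrightarrow> c \<noteq> t"
  by (force simp: disjoint_gates_def)

lemma run_cnots_disjoint_gates: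
  assumes "disjoint_gates L"
  shows "run_cnots L f p = f p \<oplus>\<^sub>2 (\<exists>c. (c, p) \<in> set L \<and> f c)"
  using assms
proof (induction L arbitrary: f)
  case Nil
  then show ?case by (simp add: bxor_def)
next
  case (Cons g L)
  obtain c' t' where g: "g = (c', t')" by (cases g)
  have fresh: "t' \<notin> fst ` set L" "t' \<notin> snd ` set L" "c' \<noteq> t'"
    using Cons.prems g by (auto simp: disjoint_gates_def)
  have "disjoint_gates L" using Cons.prems by (simp add: disjoint_gates_def)
  then have "run_cnots (g # L) f p = cnot_fun g f p \<oplus>\<^sub>2 (\<exists>c. (c, p) \<in> set L \<and> cnot_fun g f c)"
    using Cons.IH by simp
  also have "(\<exists>c. (c, p) \<in> set L \<and> cnot_fun g f c) = (\<exists>c. (c, p) \<in> set L \<and> f c)"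
    using fresh(1) by (force simp: g cnot_fun_def)
  finally show ?case
    using fresh by (cases "p = t'") (force simp: g cnot_fun_def bxor_def)+
qed

lemma valid_layerI:
  assumes "\<forall>(c, t) \<in> set L. c < N \<and> t < N" "disjoint_gates L"
  shows "valid_layer N L"
proof -
  have "distinct (concat (map (\<lambda>(c, t). [c, t]) L))"
    using assms(2)
  proof (induction L)
    case (Cons g L)
    obtain c t where g: "g = (c, t)" by (cases g)
    have "set (concat (map (\<lambda>(c, t). [c, t]) L)) = fst ` set L \<union> snd ` set L"
      by force
    then show ?case
      using Cons g by (auto simp: disjoint_gates_def simp del: set_concat)
  qed simp
  with assms show ?thesis
    by (auto simp: valid_layer_def dest: disjoint_gates_control_neq_target)
qed

lemma cnot_unitary_ket:
  assumes "c \<noteq> t"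
  shows "cnot_unitary (c, t) (ket s) = ket (cnot_bits (c, t) s)"
proof -
  have "cnot_bits (c, t) (cnot_bits (c, t) s) = s" for s
    using assms by (cases "t < length s")
      (auto simp: cnot_bits_def bxor_def nth_list_update list_eq_iff_nth_eq)
  then have "cnot_bits (c, t) u = s \<longleftrightarrow> u = cnot_bits (c, t) s" for u
    by metis
  then show ?thesis
    by (simp add: cnot_unitary_def ket_def fun_eq_iff)
qed

lemma fold_cnot_bits:
  assumes "\<forall>(c, t) \<in> set gs. c < length s \<and> t < length s" "\<forall>i < length s. f i = s ! i"
  shows "fold cnot_bits gs s = map (run_cnots gs f) [0..<length s]"
  using assms
proof (induction gs arbitrary: s f)
  case Nil
  then show ?case by (auto intro: nth_equalityI)
next
  case (Cons g gs)
  obtain c t where g: "g = (c, t)" by (cases g)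
  have len: "length (cnot_bits g s) = length s"
    by (simp add: g cnot_bits_def)
  have "\<forall>(c, t) \<in> set gs. c < length (cnot_bits g s) \<and> t < length (cnot_bits g s)"
    using Cons.prems(1) by (simp add: len)
  moreover have "\<forall>i < length (cnot_bits g s). cnot_fun g f i = cnot_bits g s ! i"
    using Cons.prems by (auto simp: len g cnot_fun_def cnot_bits_def nth_list_update)
  ultimately have "fold cnot_bits gs (cnot_bits g s) =
      map (run_cnots gs (cnot_fun g f)) [0..<length (cnot_bits g s)]"
    by (rule Cons.IH)
  then show ?case by (simp add: len)
qed

lemma fold_cnot_unitary_ket:
  assumes "\<forall>(c, t) \<in> set gs. c \<noteq> t"
  shows "fold cnot_unitary gs (ket s) = ket (fold cnot_bits gs s)"
  using assms by (induction gs arbitrary: s) (auto simp: cnot_unitary_ket)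

lemma circuit_unitary_ket:
  assumes "valid_cnot_circuit (length s) C"
  shows "circuit_unitary C (ket s) = ket (map (run_cnots (concat C) (nth s)) [0..<length s])"
proof -
  have gates: "\<forall>(c, t) \<in> set (concat C). c < length s \<and> t < length s \<and> c \<noteq> t"
    using assms by (fastforce simp: valid_cnot_circuit_def valid_layer_def)
  have "circuit_unitary C (ket s) = fold cnot_unitary (concat C) (ket s)"
    unfolding circuit_unitary_def
    by (induction C arbitrary: s rule: rev_induct) (simp_all add: layer_unitary_def)
  also have "\<dots> = ket (fold cnot_bits (concat C) s)"
    using gates by (intro fold_cnot_unitary_ket) auto
  also have "fold cnot_bits (concat C) s = map (run_cnots (concat C) (nth s)) [0..<length s]"
    using gates by (intro fold_cnot_bits) auto
  finally show ?thesis .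
qed

section \<open>Parallel fan-out by doubling\<close>

locale fanout =
  fixes G :: nat and src :: "nat \<Rightarrow> nat" and P :: "nat \<Rightarrow> nat list" and R :: nat
  assumes distinct_targets: "g < G \<Longrightarrow> distinct (P g)"
    and disjoint_targets: "g < G \<Longrightarrow> g' < G \<Longrightarrow> g \<noteq> g' \<Longrightarrow> set (P g) \<inter> set (P g') = {}"
    and source_not_target: "g < G \<Longrightarrow> g' < G \<Longrightarrow> src g \<notin> set (P g')"
    and inj_on_src: "inj_on src {..<G}"
    and length_targets: "g < G \<Longrightarrow> length (P g) \<le> 2 ^ R"
begin

lemma target_eq_iff:
  assumes "g < G" "g' < G" "i < length (P g)" "i' < length (P g')"
  shows "P g ! i = P g' ! i' \<longleftrightarrow> g = g' \<and> i = i'"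
proof
  assume eq: "P g ! i = P g' ! i'"
  then have "g = g'"
    using disjoint_targets[OF assms(1,2)] assms(3,4) by (metis disjoint_iff nth_mem)
  then show "g = g' \<and> i = i'"
    using eq distinct_targets[OF assms(1)] assms(3,4) nth_eq_iff_index_eq by blast
qed simp

definition doubling_index :: "nat \<Rightarrow> (nat \<times> nat) list" where
  "doubling_index r = filter (\<lambda>(g, i). i < length (P g)) (List.product [0..<G] [2 ^ r..<2 * 2 ^ r])"

definition doubling_layer :: "nat \<Rightarrow> cnot_gate list" where
  "doubling_layer r = map (\<lambda>(g, i). (P g ! (i - 2 ^ r), P g ! i)) (doubling_index r)"

definition seed_layer :: "cnot_gate list" where
  "seed_layer = map (\<lambda>g. (src g, P g ! 0)) (filter (\<lambda>g. P g \<noteq> []) [0..<G])"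

definition doubling_layers :: cnot_circuit where
  "doubling_layers = map doubling_layer [0..<R]"

definition fanout_circuit :: cnot_circuit where
  "fanout_circuit = rev (map rev doubling_layers) @ [seed_layer] @ doubling_layers"

lemma set_doubling_index:
  "set (doubling_index r) = {(g, i). g < G \<and> 2 ^ r \<le> i \<and> i < 2 * 2 ^ r \<and> i < length (P g)}"
  by (auto simp: doubling_index_def)

lemma mem_doubling_layer:
  "(c, p) \<in> set (doubling_layer r) \<longleftrightarrow>
   (\<exists>g i. g < G \<and> 2 ^ r \<le> i \<and> i < 2 * 2 ^ r \<and> i < length (P g) \<and> c = P g ! (i - 2 ^ r) \<and> p = P g ! i)"
  by (auto simp: doubling_layer_def set_doubling_index)

lemma mem_seed_layer: "(c, p) \<in> set seed_layer \<longleftrightarrow> (\<exists>g<G. P g \<noteq> [] \<and> c = src g \<and> p = P g ! 0)"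
  by (auto simp: seed_layer_def)

lemma disjoint_gates_doubling_layer: "disjoint_gates (doubling_layer r)"
proof -
  let ?J = "doubling_index r"
  let ?ctrl = "\<lambda>(g, i). P g ! (i - 2 ^ r)" and ?tgt = "\<lambda>(g, i). P g ! i"
  have "distinct ?J"
    unfolding doubling_index_def by (intro distinct_filter distinct_product) simp_all
  moreover have "inj_on ?ctrl (set ?J)" "inj_on ?tgt (set ?J)"
    by (auto intro!: inj_onI simp: set_doubling_index target_eq_iff)
  moreover have "?ctrl x \<noteq> ?tgt y" if "x \<in> set ?J" "y \<in> set ?J" for x y
    using that by (auto simp: set_doubling_index target_eq_iff)
  moreover have "map fst (doubling_layer r) = map ?ctrl ?J" "map snd (doubling_layer r) = map ?tgt ?J"
    by (auto simp: doubling_layer_def)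
  ultimately show ?thesis
    by (auto simp: disjoint_gates_def distinct_map)
qed

lemma disjoint_gates_seed_layer: "disjoint_gates seed_layer"
proof -
  let ?S = "{g. g < G \<and> P g \<noteq> []}"
  have "inj_on (\<lambda>g. P g ! 0) ?S"
    by (auto intro!: inj_onI simp: target_eq_iff)
  moreover have "inj_on src ?S"
    using inj_on_src by (auto simp: inj_on_def)
  moreover have "src g \<noteq> P g' ! 0" if "g < G" "g' < G" "P g' \<noteq> []" for g g'
    using source_not_target[OF that(1,2)] that(3) by (metis length_greater_0_conv nth_mem)
  ultimately show ?thesis
    by (auto simp: disjoint_gates_def seed_layer_def distinct_map comp_def)
qed

definition filled_prefix :: "(nat \<Rightarrow> bool) \<Rightarrow> nat \<Rightarrow> nat \<Rightarrow> bool" where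
  "filled_prefix v r p \<longleftrightarrow> (\<exists>g<G. \<exists>i<length (P g). i < 2 ^ r \<and> p = P g ! i \<and> v g)"

lemma filled_prefix_Suc_untargeted:
  assumes "\<nexists>c. (c, p) \<in> set (doubling_layer r)"
  shows "filled_prefix v (Suc r) p \<longleftrightarrow> filled_prefix v r p"
proof
  assume "filled_prefix v (Suc r) p"
  then obtain g i where gi: "g < G" "i < length (P g)" "i < 2 * 2 ^ r" "p = P g ! i" "v g"
    by (auto simp: filled_prefix_def)
  have "i < 2 ^ r"
  proof (rule ccontr)
    assume "\<not> i < 2 ^ r"
    then have "(P g ! (i - 2 ^ r), p) \<in> set (doubling_layer r)"
      unfolding mem_doubling_layer using gi by (intro exI[of _ g] exI[of _ i]) auto
    with assms show False by blast
  qed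
  then show "filled_prefix v r p" using gi by (auto simp: filled_prefix_def)
qed (fastforce simp: filled_prefix_def)

lemma run_doubling_layer: "run_cnots (doubling_layer r) (filled_prefix v r) = filled_prefix v (Suc r)"
proof
  fix p
  show "run_cnots (doubling_layer r) (filled_prefix v r) p = filled_prefix v (Suc r) p"
  proof (cases "\<exists>c. (c, p) \<in> set (doubling_layer r)")
    case True
    then obtain g i where gi: "g < G" "2 ^ r \<le> i" "i < 2 * 2 ^ r" "i < length (P g)" "p = P g ! i"
      by (auto simp: mem_doubling_layer)
    then have "(c, p) \<in> set (doubling_layer r) \<longleftrightarrow> c = P g ! (i - 2 ^ r)" for c
      by (auto simp: mem_doubling_layer target_eq_iff)
    moreover have "i - 2 ^ r < length (P g)" "i - 2 ^ r < 2 ^ r"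
      using gi by linarith+
    then have "filled_prefix v r (P g ! (i - 2 ^ r)) = v g"
      using gi(1) by (auto simp: filled_prefix_def target_eq_iff)
    ultimately have "(\<exists>c. (c, p) \<in> set (doubling_layer r) \<and> filled_prefix v r c) = v g"
      by auto
    moreover have "\<not> filled_prefix v r p" "filled_prefix v (Suc r) p = v g"
      using gi by (auto simp: filled_prefix_def target_eq_iff)
    ultimately show ?thesis
      using disjoint_gates_doubling_layer by (simp add: run_cnots_disjoint_gates bxor_def)
  next
    case False
    then show ?thesis
      using disjoint_gates_doubling_layer filled_prefix_Suc_untargeted
      by (simp add: run_cnots_disjoint_gates bxor_def)
  qed
qed

lemma run_doubling_layers: "run_cnots (concat doubling_layers) (filled_prefix v 0) = filled_prefix v R"
proof -
  have "run_cnots (concat (map doubling_layer [0..<r])) (filled_prefix v 0) = filled_prefix v r" for r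
    by (induction r) (simp_all add: run_doubling_layer)
  then show ?thesis by (simp add: doubling_layers_def)
qed

lemma filled_prefix_all: "filled_prefix v R p \<longleftrightarrow> (\<exists>g<G. p \<in> set (P g) \<and> v g)"
  using length_targets by (force simp: filled_prefix_def in_set_conv_nth)

lemma run_seed_layer:
  "run_cnots seed_layer h = (\<lambda>p. h p \<oplus>\<^sub>2 filled_prefix (\<lambda>g. h (src g)) 0 p)"
proof -
  have "(\<exists>c. (c, p) \<in> set seed_layer \<and> h c) = filled_prefix (\<lambda>g. h (src g)) 0 p" for p
    by (auto simp: mem_seed_layer filled_prefix_def target_eq_iff)
  then show ?thesis
    using disjoint_gates_seed_layer by (simp add: run_cnots_disjoint_gates fun_eq_iff)
qed

lemma run_fanout_circuit:
  "run_cnots (concat fanout_circuit) f = (\<lambda>p. f p \<oplus>\<^sub>2 (\<exists>g<G. p \<in> set (P g) \<and> f (src g)))"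
proof -
  let ?D = "concat doubling_layers"
  define h where "h = run_cnots (rev ?D) f"
  have "src g \<notin> snd ` set (rev ?D)" if "g < G" for g
    using that source_not_target by (force simp: doubling_layers_def mem_doubling_layer)
  then have h_src: "h (src g) = f (src g)" if "g < G" for g
    using that by (simp add: h_def run_cnots_untargeted)
  have D_gates: "\<forall>(c, t) \<in> set ?D. c \<noteq> t"
    using disjoint_gates_doubling_layer disjoint_gates_control_neq_target
    by (force simp: doubling_layers_def)
  have "filled_prefix (\<lambda>g. h (src g)) 0 = filled_prefix (\<lambda>g. f (src g)) 0"
    using h_src by (auto simp: filled_prefix_def fun_eq_iff)
  then have "run_cnots (concat fanout_circuit) f = run_cnots ?D (\<lambda>p. h p \<oplus>\<^sub>2 filled_prefix (\<lambda>g. f (src g)) 0 p)"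
    by (simp add: fanout_circuit_def h_def rev_concat rev_map run_seed_layer)
  also have "\<dots> = (\<lambda>p. f p \<oplus>\<^sub>2 filled_prefix (\<lambda>g. f (src g)) R p)"
    using D_gates by (simp add: run_cnots_xor run_doubling_layers h_def run_cnots_rev_cancel)
  finally show ?thesis by (simp add: filled_prefix_all)
qed

lemma depth_fanout_circuit: "depth fanout_circuit = 2 * R + 1"
  by (simp add: depth_def fanout_circuit_def doubling_layers_def)

lemma valid_fanout_circuit:
  assumes "\<And>g. g < G \<Longrightarrow> src g < N" "\<And>g p. g < G \<Longrightarrow> p \<in> set (P g) \<Longrightarrow> p < N"
  shows "valid_cnot_circuit N fanout_circuit"
proof -
  have "P g ! i < N" if "g < G" "i < length (P g)" for g i
    using assms(2) that nth_mem by blast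
  then have "valid_layer N (doubling_layer r)" "valid_layer N (rev (doubling_layer r))" for r
    using disjoint_gates_doubling_layer by (auto intro!: valid_layerI simp: mem_doubling_layer)
  moreover have "valid_layer N seed_layer"
    using assms disjoint_gates_seed_layer by (fastforce intro!: valid_layerI simp: mem_seed_layer)
  ultimately show ?thesis
    by (auto simp: valid_cnot_circuit_def fanout_circuit_def doubling_layers_def)
qed

end

section \<open>The QUBO circuit\<close>

definition qubo_cells :: "nat \<Rightarrow> nat \<Rightarrow> (nat \<times> nat \<times> nat) list" where
  "qubo_cells n d = concat (map (\<lambda>j. concat (map (\<lambda>a. map (\<lambda>k. (j, a, k)) [j..<n]) [0..<d])) [0..<n])"

definition qubo_cell_value :: "bool list \<Rightarrow> bool list \<Rightarrow> nat \<times> nat \<times> nat \<Rightarrow> bool" where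
  "qubo_cell_value xs ys = (\<lambda>(j, a, k). ys ! a \<oplus>\<^sub>2 xs ! j \<oplus>\<^sub>2 (j \<noteq> k \<and> xs ! k))"

lemma qubo_out_eq_map_cells:
  assumes "length xs = n" "length ys = d"
  shows "qubo_out xs ys = map (qubo_cell_value xs ys) (qubo_cells n d)"
proof -
  have "map (qubo_cell_value xs ys) (map (\<lambda>k. (j, a, k)) [j..<n]) =
        (ys ! a \<oplus>\<^sub>2 xs ! j) # map (\<lambda>k. ys ! a \<oplus>\<^sub>2 xs ! j \<oplus>\<^sub>2 xs ! k) [j + 1..<n]"
    if "j < n" for j a
    using that by (simp add: upt_conv_Cons qubo_cell_value_def bxor_def)
  then show ?thesis
    unfolding qubo_out_def qubo_cells_def assms map_concat
    by (intro arg_cong[where f = concat] map_cong) (simp_all add: map_concat comp_def del: upt_Suc)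
qed

lemma mem_qubo_cells: "(j, a, k) \<in> set (qubo_cells n d) \<longleftrightarrow> j < n \<and> a < d \<and> j \<le> k \<and> k < n"
  by (force simp: qubo_cells_def)

lemma length_qubo_cells: "length (qubo_cells n d) = (qubo_m n - 1) * d"
proof -
  have "length (qubo_cells n d) = d * (\<Sum>j<n. n - j)"
    by (simp add: qubo_cells_def length_concat comp_def sum_list_triv sum_distrib_left
        atLeast0LessThan[symmetric] sum_set_upt_conv_sum_list_nat[symmetric])
  also have "(\<Sum>j<n. n - j) = (\<Sum>i = Suc 0..n. i)"
    by (rule sum.reindex_bij_witness[of _ "\<lambda>i. n - i" "\<lambda>j. n - j"]) auto
  also have "\<dots> = qubo_m n - 1"
    using gauss_sum_from_Suc_0[of n, where ?'a = nat]
    by (simp add: qubo_m_def power2_eq_square algebra_simps)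
  finally show ?thesis by simp
qed

lemma length_qubo_cells_le: "length (qubo_cells n d) \<le> n ^ 2 * d"
proof -
  have "n \<le> n ^ 2" by (simp add: power2_eq_square)
  then have "qubo_m n - 1 \<le> n ^ 2" by (simp add: qubo_m_def)
  then show ?thesis by (simp add: length_qubo_cells)
qed

lemma length_qubo_cells_le_ceillog2:
  "length (qubo_cells n d) \<le> 2 ^ (2 * ceillog2 n + ceillog2 d)"
proof -
  have "n ^ 2 * d \<le> (2 ^ ceillog2 n) ^ 2 * 2 ^ ceillog2 d"
    by (intro mult_le_mono power_mono le_two_power_ceillog2) simp
  also have "\<dots> = 2 ^ (2 * ceillog2 n + ceillog2 d)"
    by (simp add: power_add power_mult[symmetric] mult.commute)
  finally show ?thesis
    using length_qubo_cells_le[of n d] by linarith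
qed

definition cell_targets :: "nat \<Rightarrow> nat \<Rightarrow> (nat \<times> nat \<times> nat \<Rightarrow> nat \<Rightarrow> bool) \<Rightarrow> nat \<Rightarrow> nat list" where
  "cell_targets n d sel g =
     map (\<lambda>q. n + d + q) (filter (\<lambda>q. sel (qubo_cells n d ! q) g) [0..<length (qubo_cells n d)])"

lemma mem_cell_targets:
  "p \<in> set (cell_targets n d sel g) \<longleftrightarrow>
   n + d \<le> p \<and> p < n + d + length (qubo_cells n d) \<and> sel (qubo_cells n d ! (p - (n + d))) g"
  by (auto simp: cell_targets_def image_iff) (rule exI[of _ "p - (n + d)"]; auto)

lemma fanout_cell_targets:
  assumes "\<And>g. g < G \<Longrightarrow> src g < n + d" "inj_on src {..<G}"
    and "\<And>c g g'. sel c g \<Longrightarrow> sel c g' \<Longrightarrow> g = g'"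
    and "length (qubo_cells n d) \<le> 2 ^ R"
  shows "fanout G src (cell_targets n d sel) R"
proof
  show "distinct (cell_targets n d sel g)" for g
    by (simp add: cell_targets_def distinct_map)
  show "set (cell_targets n d sel g) \<inter> set (cell_targets n d sel g') = {}" if "g \<noteq> g'" for g g'
    using that by (auto simp: mem_cell_targets dest: assms(3))
  show "src g \<notin> set (cell_targets n d sel g')" if "g < G" for g g'
    using assms(1)[OF that] by (auto simp: mem_cell_targets)
  show "length (cell_targets n d sel g) \<le> 2 ^ R" for g
    using assms(4) length_filter_le[of "\<lambda>q. sel (qubo_cells n d ! q) g" "[0..<length (qubo_cells n d)]"]
    by (simp add: cell_targets_def)
qed (rule assms(2))

locale qubo_layout =
  fixes n d R :: nat
  assumes length_qubo_cells_le_pow: "length (qubo_cells n d) \<le> 2 ^ R"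
begin

abbreviation y_targets :: "nat \<Rightarrow> nat list" where
  "y_targets \<equiv> cell_targets n d (\<lambda>(j, a, k) a'. a = a')"

abbreviation xj_targets :: "nat \<Rightarrow> nat list" where
  "xj_targets \<equiv> cell_targets n d (\<lambda>(j, a, k) j'. j = j')"

abbreviation xk_targets :: "nat \<Rightarrow> nat list" where
  "xk_targets \<equiv> cell_targets n d (\<lambda>(j, a, k) k'. k = k' \<and> j \<noteq> k)"

sublocale Y: fanout d "\<lambda>a. n + a" y_targets R
  by (rule fanout_cell_targets) (auto simp: inj_on_def length_qubo_cells_le_pow)

sublocale Xj: fanout n "\<lambda>j. j" xj_targets R
  by (rule fanout_cell_targets) (auto simp: length_qubo_cells_le_pow)

sublocale Xk: fanout n "\<lambda>k. k" xk_targets R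
  by (rule fanout_cell_targets) (auto simp: length_qubo_cells_le_pow)

definition qubo_circuit :: cnot_circuit where
  "qubo_circuit = Y.fanout_circuit @ Xj.fanout_circuit @ Xk.fanout_circuit"

lemma depth_qubo_circuit: "depth qubo_circuit = 6 * R + 3"
  using Y.depth_fanout_circuit Xj.depth_fanout_circuit Xk.depth_fanout_circuit
  by (simp add: qubo_circuit_def depth_def)

lemma valid_qubo_circuit: "valid_cnot_circuit (n + d + length (qubo_cells n d)) qubo_circuit"
proof -
  have "valid_cnot_circuit (n + d + length (qubo_cells n d)) Y.fanout_circuit"
    "valid_cnot_circuit (n + d + length (qubo_cells n d)) Xj.fanout_circuit"
    "valid_cnot_circuit (n + d + length (qubo_cells n d)) Xk.fanout_circuit"
    by (auto intro!: Y.valid_fanout_circuit Xj.valid_fanout_circuit Xk.valid_fanout_circuit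
        simp: mem_cell_targets)
  then show ?thesis by (auto simp: qubo_circuit_def valid_cnot_circuit_def)
qed

lemma run_qubo_circuit:
  "run_cnots (concat qubo_circuit) f p =
     f p \<oplus>\<^sub>2 (\<exists>a<d. p \<in> set (y_targets a) \<and> f (n + a))
         \<oplus>\<^sub>2 (\<exists>j<n. p \<in> set (xj_targets j) \<and> f j)
         \<oplus>\<^sub>2 (\<exists>k<n. p \<in> set (xk_targets k) \<and> f k)"
proof -
  have untargeted: "p \<notin> set (cell_targets n d sel g)" if "p < n + d" for p sel g
    using that by (simp add: mem_cell_targets)
  show ?thesis
    by (simp add: qubo_circuit_def Y.run_fanout_circuit Xj.run_fanout_circuit
        Xk.run_fanout_circuit untargeted bxor_def)
qed

lemma run_qubo_circuit_input: "p < n + d \<Longrightarrow> run_cnots (concat qubo_circuit) f p = f p"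
  by (simp add: run_qubo_circuit mem_cell_targets bxor_def)

lemma run_qubo_circuit_cell:
  assumes "q < length (qubo_cells n d)" "qubo_cells n d ! q = (j, a, k)"
  shows "run_cnots (concat qubo_circuit) f (n + d + q) =
    f (n + d + q) \<oplus>\<^sub>2 f (n + a) \<oplus>\<^sub>2 f j \<oplus>\<^sub>2 (j \<noteq> k \<and> f k)"
proof -
  have "j < n" "a < d" "k < n"
    using assms nth_mem[OF assms(1)] by (auto simp: mem_qubo_cells)
  then show ?thesis
    using assms by (auto simp: run_qubo_circuit mem_cell_targets bxor_def)
qed

lemma run_qubo_circuit_basis:
  assumes "length xs = n" "length ys = d"
  defines "s \<equiv> xs @ ys @ replicate (length (qubo_cells n d)) False"
  shows "map (run_cnots (concat qubo_circuit) (nth s)) [0..<length s] = xs @ ys @ qubo_out xs ys"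
proof (rule nth_equalityI)
  show "length (map (run_cnots (concat qubo_circuit) (nth s)) [0..<length s]) =
    length (xs @ ys @ qubo_out xs ys)"
    using assms by (simp add: qubo_out_eq_map_cells)
next
  fix p assume "p < length (map (run_cnots (concat qubo_circuit) (nth s)) [0..<length s])"
  then have p: "p < n + d + length (qubo_cells n d)"
    using assms by simp
  show "map (run_cnots (concat qubo_circuit) (nth s)) [0..<length s] ! p = (xs @ ys @ qubo_out xs ys) ! p"
  proof (cases "p < n + d")
    case True
    then show ?thesis
      using assms p by (auto simp: run_qubo_circuit_input nth_append)
  next
    case False
    then obtain q where q: "p = n + d + q" "q < length (qubo_cells n d)"
      using p by (metis add_less_cancel_left le_Suc_ex not_le)
    obtain j a k where jak: "qubo_cells n d ! q = (j, a, k)"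
      by (cases "qubo_cells n d ! q")
    have "j < n" "a < d" "k < n"
      using jak nth_mem[OF q(2)] by (auto simp: mem_qubo_cells)
    then show ?thesis
      using assms q jak
      by (simp add: run_qubo_circuit_cell nth_append qubo_out_eq_map_cells qubo_cell_value_def bxor_def)
  qed
qed

lemma qubo_circuit_correct:
  assumes "length xs = n" "length ys = d"
  shows "circuit_unitary qubo_circuit (ket (xs @ ys @ replicate (length (qubo_cells n d)) False)) =
    ket (xs @ ys @ qubo_out xs ys)"
proof -
  have "valid_cnot_circuit (length (xs @ ys @ replicate (length (qubo_cells n d)) False)) qubo_circuit"
    using assms valid_qubo_circuit by (simp add: add.assoc)
  then show ?thesis
    using run_qubo_circuit_basis[OF assms] by (simp only: circuit_unitary_ket)
qed

end

theorem mainTheorem2: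
  shows "\<exists>K::real. \<forall>n d :: nat. n \<ge> 1 \<longrightarrow> d \<ge> 1 \<longrightarrow>
    (\<exists>C :: cnot_circuit.
        valid_cnot_circuit (n + qubo_m n * d) C \<and>
        real (depth C) \<le> K * (log 2 (real n) + log 2 (real d) + 1) \<and>
        (\<forall>xs ys. length xs = n \<longrightarrow> length ys = d \<longrightarrow>
           circuit_unitary C (ket (xs @ ys @ replicate ((qubo_m n - 1) * d) False))
             = ket (xs @ ys @ qubo_out xs ys)))"
proof (intro exI[of _ 21] allI impI)
  fix n d :: nat
  assume "n \<ge> 1" "d \<ge> 1"
  interpret qubo_layout n d "2 * ceillog2 n + ceillog2 d"
    by unfold_locales (rule length_qubo_cells_le_ceillog2)
  have "real (ceillog2 n) < log 2 (real n) + 1" "real (ceillog2 d) < log 2 (real d) + 1"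
    "log 2 (real n) \<ge> 0" "log 2 (real d) \<ge> 0"
    using \<open>n \<ge> 1\<close> \<open>d \<ge> 1\<close> by (simp_all add: ceillog2_less_log)
  then have depth: "real (depth qubo_circuit) \<le> 21 * (log 2 (real n) + log 2 (real d) + 1)"
    unfolding depth_qubo_circuit by simp
  have "qubo_m n \<ge> 1"
    by (simp add: qubo_m_def)
  then have qubits: "n + qubo_m n * d = n + d + (qubo_m n - 1) * d"
    by (cases "qubo_m n") simp_all
  show "\<exists>C. valid_cnot_circuit (n + qubo_m n * d) C \<and>
      real (depth C) \<le> 21 * (log 2 (real n) + log 2 (real d) + 1) \<and>
      (\<forall>xs ys. length xs = n \<longrightarrow> length ys = d \<longrightarrow>
         circuit_unitary C (ket (xs @ ys @ replicate ((qubo_m n - 1) * d) False))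
           = ket (xs @ ys @ qubo_out xs ys))"
    unfolding qubits length_qubo_cells[symmetric]
    using valid_qubo_circuit depth qubo_circuit_correct by blast
qed

end
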